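(* Let $x\in S_N$. Then $x$ contains a $[231]$-pattern if and only if $x$ has an unmatched ascent. Likewise, $x$ contains a $[312]$-pattern if and only if $x$ has an unmatched descent.
   Context: $S_N$ is generated by $s_1,\dots,s_{N-1}$; permutations are in one-line notation and composed as functions, $(uv)(j)=u(v(j))$, so $xs_i$ swaps the entries in positions $i,i+1$. $\operatorname{len}$ denotes Coxeter length (number of inversions). $y$ has a right descent at $i$ if $\operatorname{len}(ys_i)<\operatorname{len}(y)$, and $z$ has a left descent at $i$ if $\operatorname{len}(s_iz)<\operatorname{len}(z)$. $x$ has an unmatched ascent if there exist $i$ and $y,z\in S_N$ with $x=y\,s_is_{i+1}\,z$, $\operatorname{len}(x)=\operatorname{len}(y)+2+\operatorname{len}(z)$, $y$ has no right descents in $\{i,i+1\}$ and $z$ has no left descents in $\{i,i+1\}$. An unmatched descent is defined identically with $s_is_{i+1}$ replaced by $s_{i+1}s_i$. $x$ contains a pattern $\sigma\in S_3$ if some subsequence $x(a),x(b),x(c)$, $a<b<c$, is in the same relative order as $\sigma$. *)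

theory Defs
  imports "HOL-Combinatorics.Combinatorics"
begin

text \<open>Permutations of S_N are functions on nat permuting {1..N} (positions and values 1..N);
  composition is function composition, (u v)(j) = u (v j).\<close>

definition sgen :: "nat \<Rightarrow> nat \<Rightarrow> nat" where
  "sgen i = transpose i (Suc i)"

definition len :: "nat \<Rightarrow> (nat \<Rightarrow> nat) \<Rightarrow> nat" where
  "len N x = card {(a, b). 1 \<le> a \<and> a < b \<and> b \<le> N \<and> x a > x b}"

definition right_descent :: "nat \<Rightarrow> (nat \<Rightarrow> nat) \<Rightarrow> nat \<Rightarrow> bool" where
  "right_descent N y i \<longleftrightarrow> len N (y \<circ> sgen i) < len N y"

definition left_descent :: "nat \<Rightarrow> (nat \<Rightarrow> nat) \<Rightarrow> nat \<Rightarrow> bool" where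
  "left_descent N z i \<longleftrightarrow> len N (sgen i \<circ> z) < len N z"

definition unmatched_ascent :: "nat \<Rightarrow> (nat \<Rightarrow> nat) \<Rightarrow> bool" where
  "unmatched_ascent N x \<longleftrightarrow>
     (\<exists>i y z. 1 \<le> i \<and> i + 1 \<le> N - 1 \<and> y permutes {1..N} \<and> z permutes {1..N} \<and>
        x = y \<circ> sgen i \<circ> sgen (i + 1) \<circ> z \<and>
        len N x = len N y + 2 + len N z \<and>
        \<not> right_descent N y i \<and> \<not> right_descent N y (i + 1) \<and>
        \<not> left_descent N z i \<and> \<not> left_descent N z (i + 1))"

definition unmatched_descent :: "nat \<Rightarrow> (nat \<Rightarrow> nat) \<Rightarrow> bool" where
  "unmatched_descent N x \<longleftrightarrow>
     (\<exists>i y z. 1 \<le> i \<and> i + 1 \<le> N - 1 \<and> y permutes {1..N} \<and> z permutes {1..N} \<and>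
        x = y \<circ> sgen (i + 1) \<circ> sgen i \<circ> z \<and>
        len N x = len N y + 2 + len N z \<and>
        \<not> right_descent N y i \<and> \<not> right_descent N y (i + 1) \<and>
        \<not> left_descent N z i \<and> \<not> left_descent N z (i + 1))"

text \<open>Pattern sigma in S_3 given in one-line notation as a list of length 3.\<close>
definition contains_pattern :: "nat \<Rightarrow> (nat \<Rightarrow> nat) \<Rightarrow> nat list \<Rightarrow> bool" where
  "contains_pattern N x \<sigma> \<longleftrightarrow>
     (\<exists>a b c. 1 \<le> a \<and> a < b \<and> b < c \<and> c \<le> N \<and>
        (let p = [a, b, c] in
          \<forall>j < 3. \<forall>k < 3. (x (p ! j) < x (p ! k) \<longleftrightarrow> \<sigma> ! j < \<sigma> ! k)))"

end

theory Submission
  imports Defs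
begin

text \<open>If x = y s_i s_(i+1) z is an unmatched ascent, then y is increasing on i, i+1, i+2 and
  z^-1 is increasing there, so x takes the values y(i+1), y(i+2), y(i) at the increasing
  positions z^-1(i), z^-1(i+1), z^-1(i+2): a [231]-pattern.
  Conversely, a [231]-pattern can be chosen at positions p < q < r such that all values strictly
  between p and q lie below x(p) and all values strictly between q and r lie above x(r).
  The permutation z that moves p and r next to q (shifting the blocks in between outwards) then
  only has inversions that x already has, so x = w z is length-additive, and w carries the
  pattern on the three consecutive positions q-1, q, q+1, where it factors as w = y s_i s_(i+1)
  with y increasing. The [312] case is the same with the two generators exchanged.\<close>

definition inversions :: "nat \<Rightarrow> (nat \<Rightarrow> nat) \<Rightarrow> (nat \<times> nat) set" where
  "inversions N x = {(a, b). 1 \<le> a \<and> a < b \<and> b \<le> N \<and> x a > x b}"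

lemma len_eq_card_inversions: "len N x = card (inversions N x)"
  by (simp add: len_def inversions_def)

lemma finite_inversions: "finite (inversions N x)"
  by (rule finite_subset[of _ "{1..N} \<times> {1..N}"]) (auto simp: inversions_def)

lemma permutes_neq: "x permutes S \<Longrightarrow> a \<noteq> b \<Longrightarrow> x a \<noteq> x b"
  by (metis permutes_inj inj_eq)

lemma sgen_permutes: "1 \<le> k \<Longrightarrow> k + 1 \<le> N \<Longrightarrow> sgen k permutes {1..N}"
  unfolding sgen_def by (rule permutes_swap_id) auto

lemma transpose_Suc_less_iff:
  "{m, n} \<noteq> {k, Suc k} \<Longrightarrow> transpose k (Suc k) m > transpose k (Suc k) n \<longleftrightarrow> m > n"
  unfolding transpose_def by (auto simp: doubleton_eq_iff)

lemma len_inv: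
  assumes x: "x permutes {1..N}"
  shows "len N (inv x) = len N x"
proof -
  have inv_in: "inv x a \<in> {1..N}" and in_x: "x a \<in> {1..N}" if "a \<in> {1..N}" for a
    using that by (simp_all only: permutes_in_image[OF permutes_inv[OF x]] permutes_in_image[OF x])
  have "bij_betw (\<lambda>(a, b). (x b, x a)) (inversions N x) (inversions N (inv x))"
  proof (rule bij_betw_byWitness[where f' = "\<lambda>(c, d). (inv x d, inv x c)"])
    show "(\<lambda>(a, b). (x b, x a)) ` inversions N x \<subseteq> inversions N (inv x)"
      using in_x by (force simp: inversions_def permutes_inverses[OF x])
    show "(\<lambda>(c, d). (inv x d, inv x c)) ` inversions N (inv x) \<subseteq> inversions N x"
      using inv_in by (force simp: inversions_def permutes_inverses[OF x])
    show "\<forall>p \<in> inversions N x. (\<lambda>(c, d). (inv x d, inv x c)) ((\<lambda>(a, b). (x b, x a)) p) = p"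
      by (simp add: permutes_inverses[OF x] split_beta)
    show "\<forall>p \<in> inversions N (inv x). (\<lambda>(a, b). (x b, x a)) ((\<lambda>(c, d). (inv x d, inv x c)) p) = p"
      by (simp add: permutes_inverses[OF x] split_beta)
  qed
  then show ?thesis
    by (simp add: len_eq_card_inversions bij_betw_same_card)
qed

text \<open>Left multiplication by s_k only changes the relative order of the two positions carrying
  the values k and k+1.\<close>

lemma len_sgen_comp:
  assumes z: "z permutes {1..N}" and k: "1 \<le> k" "k + 1 \<le> N" and lt: "inv z k < inv z (k + 1)"
  shows "len N (sgen k \<circ> z) = len N z + 1"
proof -
  let ?u = "inv z k" and ?v = "inv z (k + 1)"
  have zuv: "z ?u = k" "z ?v = k + 1"
    using permutes_inverses[OF z] by auto
  have uv: "?u \<in> {1..N}" "?v \<in> {1..N}"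
    using permutes_in_image[OF permutes_inv[OF z]] k by auto
  have "inversions N (sgen k \<circ> z) = insert (?u, ?v) (inversions N z)"
  proof (rule set_eqI, clarify)
    fix a b
    show "(a, b) \<in> inversions N (sgen k \<circ> z) \<longleftrightarrow> (a, b) \<in> insert (?u, ?v) (inversions N z)"
    proof (cases "a < b \<and> {z a, z b} = {k, k + 1}")
      case True
      then have "z a = k \<and> z b = k + 1 \<or> z a = k + 1 \<and> z b = k"
        by (auto simp: doubleton_eq_iff)
      then have "a = ?u \<and> b = ?v \<or> a = ?v \<and> b = ?u"
        using permutes_inv_eq[OF z] by metis
      then have "a = ?u \<and> b = ?v"
        using True lt by auto
      then show ?thesis
        using zuv uv lt by (auto simp: inversions_def sgen_def)
    next
      case False
      then have "(a, b) \<noteq> (?u, ?v)"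
        using zuv lt by auto
      moreover have "a < b \<Longrightarrow> sgen k (z a) > sgen k (z b) \<longleftrightarrow> z a > z b"
        using False transpose_Suc_less_iff[of "z a" "z b" k] by (simp add: sgen_def)
      ultimately show ?thesis
        by (auto simp: inversions_def)
    qed
  qed
  moreover have "(?u, ?v) \<notin> inversions N z"
    using zuv by (auto simp: inversions_def)
  ultimately show ?thesis
    by (simp add: len_eq_card_inversions finite_inversions)
qed

lemma len_comp_sgen:
  assumes y: "y permutes {1..N}" and k: "1 \<le> k" "k + 1 \<le> N" and lt: "y k < y (k + 1)"
  shows "len N (y \<circ> sgen k) = len N y + 1"
proof -
  have "inv (y \<circ> sgen k) = sgen k \<circ> inv y"
    by (simp add: o_inv_distrib permutes_bij[OF y] sgen_def)
  then have "len N (y \<circ> sgen k) = len N (sgen k \<circ> inv y)"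
    using len_inv[OF permutes_compose[OF sgen_permutes[OF k] y]] by simp
  also have "\<dots> = len N (inv y) + 1"
    using lt by (intro len_sgen_comp[OF permutes_inv[OF y] k]) (simp add: permutes_inv_inv[OF y])
  finally show ?thesis
    using len_inv[OF y] by simp
qed

lemma not_right_descent_iff:
  assumes y: "y permutes {1..N}" and k: "1 \<le> k" "k + 1 \<le> N"
  shows "\<not> right_descent N y k \<longleftrightarrow> y k < y (k + 1)"
proof (cases "y k < y (k + 1)")
  case True
  then show ?thesis
    using len_comp_sgen[OF y k] by (simp add: right_descent_def)
next
  case False
  then have "y (k + 1) < y k"
    using permutes_neq[OF y, of k "k + 1"] by simp
  then have "len N (y \<circ> sgen k \<circ> sgen k) = len N (y \<circ> sgen k) + 1"
    by (intro len_comp_sgen[OF permutes_compose[OF sgen_permutes[OF k] y] k]) (simp add: sgen_def)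
  moreover have "y \<circ> sgen k \<circ> sgen k = y"
    by (simp add: fun_eq_iff sgen_def)
  ultimately show ?thesis
    using False by (simp add: right_descent_def)
qed

lemma not_left_descent_iff:
  assumes z: "z permutes {1..N}" and k: "1 \<le> k" "k + 1 \<le> N"
  shows "\<not> left_descent N z k \<longleftrightarrow> inv z k < inv z (k + 1)"
proof (cases "inv z k < inv z (k + 1)")
  case True
  then show ?thesis
    using len_sgen_comp[OF z k] by (simp add: left_descent_def)
next
  case False
  then have "inv z (k + 1) < inv z k"
    using permutes_neq[OF permutes_inv[OF z], of k "k + 1"] by simp
  moreover have "inv (sgen k \<circ> z) = inv z \<circ> sgen k"
    by (simp add: o_inv_distrib permutes_bij[OF z] sgen_def)
  ultimately have "len N (sgen k \<circ> (sgen k \<circ> z)) = len N (sgen k \<circ> z) + 1"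
    by (intro len_sgen_comp[OF permutes_compose[OF z sgen_permutes[OF k]] k]) (simp add: sgen_def)
  moreover have "sgen k \<circ> (sgen k \<circ> z) = z"
    by (simp add: fun_eq_iff sgen_def)
  ultimately show ?thesis
    using False by (simp add: left_descent_def)
qed

lemma bij_betw_new_inversions:
  assumes w: "w permutes {1..N}" and z: "z permutes {1..N}"
    and sub: "inversions N z \<subseteq> inversions N (w \<circ> z)"
  shows "bij_betw (\<lambda>(a, b). (z a, z b))
           {(a, b) \<in> inversions N (w \<circ> z). z a < z b} (inversions N w)"
proof (rule bij_betw_byWitness[where f' = "\<lambda>(c, d). (inv z c, inv z d)"])
  have z_in: "z a \<in> {1..N}" and inv_in: "inv z a \<in> {1..N}" if "a \<in> {1..N}" for a
    using that by (simp_all only: permutes_in_image[OF z] permutes_in_image[OF permutes_inv[OF z]])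
  show "(\<lambda>(a, b). (z a, z b)) ` {(a, b) \<in> inversions N (w \<circ> z). z a < z b} \<subseteq> inversions N w"
    using z_in by (force simp: inversions_def)
  show "(\<lambda>(c, d). (inv z c, inv z d)) ` inversions N w
          \<subseteq> {(a, b) \<in> inversions N (w \<circ> z). z a < z b}"
  proof clarify
    fix c d
    assume cd: "(c, d) \<in> inversions N w"
    then have range: "inv z c \<in> {1..N}" "inv z d \<in> {1..N}" and "c < d"
      using inv_in by (auto simp: inversions_def)
    have zz: "z (inv z c) = c" "z (inv z d) = d"
      by (simp_all add: permutes_inverses[OF z])
    have "\<not> inv z d < inv z c"
    proof
      assume "inv z d < inv z c"
      then have "(inv z d, inv z c) \<in> inversions N z"
        using range zz \<open>c < d\<close> by (auto simp: inversions_def)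
      then show False
        using sub cd zz by (auto simp: inversions_def)
    qed
    moreover have "inv z c \<noteq> inv z d"
      using zz \<open>c < d\<close> by (metis less_irrefl)
    ultimately show "(inv z c, inv z d) \<in> inversions N (w \<circ> z) \<and> z (inv z c) < z (inv z d)"
      using range zz cd by (auto simp: inversions_def)
  qed
  show "\<forall>p \<in> {(a, b) \<in> inversions N (w \<circ> z). z a < z b}.
          (\<lambda>(c, d). (inv z c, inv z d)) ((\<lambda>(a, b). (z a, z b)) p) = p"
    by (simp add: permutes_inverses[OF z] split_beta)
  show "\<forall>p \<in> inversions N w. (\<lambda>(a, b). (z a, z b)) ((\<lambda>(c, d). (inv z c, inv z d)) p) = p"
    by (simp add: permutes_inverses[OF z] split_beta)
qed

lemma len_comp_eq_add:
  assumes w: "w permutes {1..N}" and z: "z permutes {1..N}"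
    and sub: "inversions N z \<subseteq> inversions N (w \<circ> z)"
  shows "len N (w \<circ> z) = len N w + len N z"
proof -
  let ?new = "{(a, b) \<in> inversions N (w \<circ> z). z a < z b}"
  have "(a, b) \<in> inversions N z \<union> ?new" if ab: "(a, b) \<in> inversions N (w \<circ> z)" for a b
  proof -
    have "z a \<noteq> z b"
      using ab permutes_neq[OF z, of a b] by (auto simp: inversions_def)
    then show ?thesis
      using ab by (auto simp: inversions_def)
  qed
  then have "inversions N (w \<circ> z) = inversions N z \<union> ?new"
    using sub by auto
  then have "card (inversions N (w \<circ> z)) = card (inversions N z \<union> ?new)"
    by (rule arg_cong)
  also have "\<dots> = card (inversions N z) + card ?new"
  proof (rule card_Un_disjoint[OF finite_inversions])
    show "finite ?new"
      by (rule finite_subset[OF _ finite_inversions]) auto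
    show "inversions N z \<inter> ?new = {}"
      by (auto simp: inversions_def)
  qed
  also have "card ?new = card (inversions N w)"
    using bij_betw_same_card[OF bij_betw_new_inversions[OF assms]] .
  finally show ?thesis
    by (simp only: len_eq_card_inversions add.commute)
qed

definition gather :: "nat \<Rightarrow> nat \<Rightarrow> nat \<Rightarrow> nat \<Rightarrow> nat" where
  "gather p q r j =
     (if j = p then q - 1 else if p < j \<and> j < q then j - 1
      else if q < j \<and> j < r then j + 1 else if j = r then q + 1 else j)"

lemma gather_permutes:
  assumes "1 \<le> p" "p < q" "q < r" "r \<le> N"
  shows "gather p q r permutes {1..N}"
proof (rule inj_imp_permutes)
  show "inj_on (gather p q r) {1..N}"
    by (rule linorder_inj_onI) (use assms in \<open>auto simp: gather_def\<close>)
  show "gather p q r j \<in> {1..N}" if "j \<in> {1..N}" for j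
    using assms that by (auto simp: gather_def)
  show "gather p q r j = j" if "j \<notin> {1..N}" for j
    using assms that by (auto simp: gather_def)
  show "finite {1..N}"
    by simp
qed

lemma gather_inversion:
  assumes "p < q" "q < r" "s < t" "gather p q r t < gather p q r s"
  shows "s = p \<and> p < t \<and> t < q \<or> q < s \<and> s < r \<and> t = r"
  using assms unfolding gather_def by (auto split: if_splits)

lemma length_additive_gather:
  assumes x: "x permutes {1..N}" and pqr: "1 \<le> p" "p < q" "q < r" "r \<le> N"
    and below: "\<And>s. p < s \<Longrightarrow> s < q \<Longrightarrow> x s < x p"
    and above: "\<And>s. q < s \<Longrightarrow> s < r \<Longrightarrow> x r < x s"
  shows "len N x = len N (x \<circ> inv (gather p q r)) + len N (gather p q r)"
proof -
  let ?g = "gather p q r"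
  have g: "?g permutes {1..N}"
    using gather_permutes[OF pqr] .
  have x_eq: "x \<circ> inv ?g \<circ> ?g = x"
    by (simp add: fun_eq_iff permutes_inverses[OF g])
  have "inversions N ?g \<subseteq> inversions N x"
  proof clarify
    fix s t
    assume "(s, t) \<in> inversions N ?g"
    then have st: "1 \<le> s" "s < t" "t \<le> N" "?g t < ?g s"
      by (auto simp: inversions_def)
    then have "s = p \<and> p < t \<and> t < q \<or> q < s \<and> s < r \<and> t = r"
      using gather_inversion[OF pqr(2,3)] by blast
    then have "x t < x s"
      using below above by auto
    then show "(s, t) \<in> inversions N x"
      using st by (simp add: inversions_def)
  qed
  then show ?thesis
    using len_comp_eq_add[OF permutes_compose[OF permutes_inv[OF g] x] g] x_eq by simp
qed

lemma gathered_factorization: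
  assumes x: "x permutes {1..N}" and pqr: "1 \<le> p" "p < q" "q < r" "r \<le> N"
    and below: "\<And>s. p < s \<Longrightarrow> s < q \<Longrightarrow> x s < x p"
    and above: "\<And>s. q < s \<Longrightarrow> s < r \<Longrightarrow> x r < x s"
  obtains w z where "w permutes {1..N}" "z permutes {1..N}" "x = w \<circ> z"
    "len N x = len N w + len N z"
    "w (q - 1) = x p" "w q = x q" "w (q + 1) = x r"
    "\<not> left_descent N z (q - 1)" "\<not> left_descent N z q"
proof -
  let ?g = "gather p q r"
  have g: "?g permutes {1..N}"
    using gather_permutes[OF pqr] .
  have inv_g: "inv ?g (q - 1) = p" "inv ?g q = q" "inv ?g (q + 1) = r"
    using pqr by (simp_all add: permutes_inv_eq[OF g] gather_def)
  have "x = x \<circ> inv ?g \<circ> ?g"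
    by (simp add: fun_eq_iff permutes_inverses[OF g])
  moreover have "\<not> left_descent N ?g (q - 1)" "\<not> left_descent N ?g q"
    using not_left_descent_iff[OF g, of "q - 1"] not_left_descent_iff[OF g, of q] inv_g pqr
    by simp_all
  ultimately show ?thesis
    using that[OF permutes_compose[OF permutes_inv[OF g] x] g] length_additive_gather[OF assms] inv_g
    by simp
qed

lemma contains_231_iff:
  "contains_pattern N x [2, 3, 1] \<longleftrightarrow>
     (\<exists>a b c. 1 \<le> a \<and> a < b \<and> b < c \<and> c \<le> N \<and> x c < x a \<and> x a < x b)"
proof -
  have "(\<forall>j<3. \<forall>k<3. x ([a, b, c] ! j) < x ([a, b, c] ! k) \<longleftrightarrow>
          [2, 3, 1] ! j < ([2, 3, 1] ! k :: nat)) \<longleftrightarrow> x c < x a \<and> x a < x b" for a b c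
    by (simp add: numeral_3_eq_3 All_less_Suc) linarith
  then show ?thesis
    unfolding contains_pattern_def Let_def by simp
qed

lemma contains_312_iff:
  "contains_pattern N x [3, 1, 2] \<longleftrightarrow>
     (\<exists>a b c. 1 \<le> a \<and> a < b \<and> b < c \<and> c \<le> N \<and> x b < x c \<and> x c < x a)"
proof -
  have "(\<forall>j<3. \<forall>k<3. x ([a, b, c] ! j) < x ([a, b, c] ! k) \<longleftrightarrow>
          [3, 1, 2] ! j < ([3, 1, 2] ! k :: nat)) \<longleftrightarrow> x b < x c \<and> x c < x a" for a b c
    by (simp add: numeral_3_eq_3 All_less_Suc) linarith
  then show ?thesis
    unfolding contains_pattern_def Let_def by simp
qed

lemma obtain_first_after:
  assumes "m < (k::nat)" "P k"
  obtains t where "m < t" "t \<le> k" "P t" "\<And>s. m < s \<Longrightarrow> s < t \<Longrightarrow> \<not> P s"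
proof -
  let ?t = "LEAST t. m < t \<and> P t"
  have "m < ?t \<and> P ?t"
    using LeastI[of "\<lambda>t. m < t \<and> P t" k] assms by auto
  moreover have "?t \<le> k"
    using Least_le[of "\<lambda>t. m < t \<and> P t" k] assms by auto
  moreover have "\<not> P s" if "m < s" "s < ?t" for s
    using not_less_Least[of s "\<lambda>t. m < t \<and> P t"] that by auto
  ultimately show ?thesis
    using that by blast
qed

lemma obtain_last_before:
  assumes "(k::nat) < m" "P k"
  obtains t where "k \<le> t" "t < m" "P t" "\<And>s. t < s \<Longrightarrow> s < m \<Longrightarrow> \<not> P s"
proof -
  let ?Q = "\<lambda>t. k \<le> t \<and> t < m \<and> P t"
  have greatest: "k \<le> Greatest ?Q \<and> Greatest ?Q < m \<and> P (Greatest ?Q)"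
    using GreatestI_nat[of ?Q k m] assms by auto
  moreover have "\<not> P s" if "Greatest ?Q < s" "s < m" for s
    using Greatest_le_nat[of ?Q s m] greatest that by auto
  ultimately show ?thesis
    using that by blast
qed

text \<open>Choose \<open>q\<close> as the first position after \<open>p\<close> with a larger value, then \<open>r\<close> as the first
  position after \<open>q\<close> with a value below \<open>x p\<close>.\<close>

lemma obtain_tight_231:
  assumes x: "x permutes {1..N}" and "contains_pattern N x [2, 3, 1]"
  obtains p q r where "1 \<le> p" "p < q" "q < r" "r \<le> N" "x r < x p" "x p < x q"
    "\<And>s. p < s \<Longrightarrow> s < q \<Longrightarrow> x s < x p" "\<And>s. q < s \<Longrightarrow> s < r \<Longrightarrow> x r < x s"
proof -
  obtain p q0 r0 where pqr0: "1 \<le> p" "p < q0" "q0 < r0" "r0 \<le> N" "x r0 < x p" "x p < x q0"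
    using assms(2) unfolding contains_231_iff by blast
  obtain q where q: "p < q" "q \<le> q0" "x p < x q" "\<And>s. p < s \<Longrightarrow> s < q \<Longrightarrow> \<not> x p < x s"
    using obtain_first_after[of p q0 "\<lambda>t. x p < x t"] pqr0 by blast
  obtain r where r: "q < r" "r \<le> r0" "x r < x p" "\<And>s. q < s \<Longrightarrow> s < r \<Longrightarrow> \<not> x s < x p"
    using obtain_first_after[of q r0 "\<lambda>t. x t < x p"] pqr0 q by auto
  have "x s < x p" if "p < s" "s < q" for s
    using q(4)[OF that] permutes_neq[OF x, of s p] that by force
  moreover have "x r < x s" if "q < s" "s < r" for s
    using r(3) r(4)[OF that] permutes_neq[OF x, of s p] q(1) that by force
  ultimately show ?thesis
    using pqr0 q r by (auto intro!: that[of p q r])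
qed

lemma obtain_tight_312:
  assumes x: "x permutes {1..N}" and "contains_pattern N x [3, 1, 2]"
  obtains p q r where "1 \<le> p" "p < q" "q < r" "r \<le> N" "x q < x r" "x r < x p"
    "\<And>s. p < s \<Longrightarrow> s < q \<Longrightarrow> x s < x p" "\<And>s. q < s \<Longrightarrow> s < r \<Longrightarrow> x r < x s"
proof -
  obtain p0 q0 r where pqr0: "1 \<le> p0" "p0 < q0" "q0 < r" "r \<le> N" "x q0 < x r" "x r < x p0"
    using assms(2) unfolding contains_312_iff by blast
  obtain q where q: "q0 \<le> q" "q < r" "x q < x r" "\<And>s. q < s \<Longrightarrow> s < r \<Longrightarrow> \<not> x s < x r"
    using obtain_last_before[of q0 r "\<lambda>t. x t < x r"] pqr0 by blast
  obtain p where p: "p0 \<le> p" "p < q" "x r < x p" "\<And>s. p < s \<Longrightarrow> s < q \<Longrightarrow> \<not> x r < x s"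
    using obtain_last_before[of p0 q "\<lambda>t. x r < x t"] pqr0 q by auto
  have "x s < x p" if "p < s" "s < q" for s
    using p(3) p(4)[OF that] permutes_neq[OF x, of s r] q(2) that by force
  moreover have "x r < x s" if "q < s" "s < r" for s
    using q(4)[OF that] permutes_neq[OF x, of s r] that by force
  ultimately show ?thesis
    using pqr0 q p by (auto intro!: that[of p q r])
qed

lemma unmatched_ascent_if_231:
  assumes x: "x permutes {1..N}" and "contains_pattern N x [2, 3, 1]"
  shows "unmatched_ascent N x"
proof -
  obtain p q r where pqr: "1 \<le> p" "p < q" "q < r" "r \<le> N" and vals: "x r < x p" "x p < x q"
    and tight: "\<And>s. p < s \<Longrightarrow> s < q \<Longrightarrow> x s < x p" "\<And>s. q < s \<Longrightarrow> s < r \<Longrightarrow> x r < x s"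
    using obtain_tight_231[OF assms] by blast
  obtain w z where w: "w permutes {1..N}" and z: "z permutes {1..N}" and "x = w \<circ> z"
    and len_x: "len N x = len N w + len N z"
    and w_vals: "w (q - 1) = x p" "w q = x q" "w (q + 1) = x r"
    and z_asc: "\<not> left_descent N z (q - 1)" "\<not> left_descent N z q"
    using gathered_factorization[OF x pqr tight] by blast
  define i where "i = q - 1"
  have i: "1 \<le> i" "i + 1 = q" "i + 2 \<le> N"
    using pqr by (auto simp: i_def)
  define y where "y = w \<circ> sgen (i + 1) \<circ> sgen i"
  have y: "y permutes {1..N}"
    using i unfolding y_def by (intro permutes_compose[OF sgen_permutes] w) auto
  have w_eq: "w = y \<circ> sgen i \<circ> sgen (i + 1)"
    by (simp add: y_def fun_eq_iff sgen_def)
  have y_vals: "y i = x r" "y (i + 1) = x p" "y (i + 2) = x q"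
    using w_vals i by (simp_all add: y_def sgen_def i_def)
  moreover have "len N (y \<circ> sgen i) = len N y + 1"
    using len_comp_sgen[OF y i(1)] y_vals vals i by simp
  moreover have "len N (y \<circ> sgen i \<circ> sgen (i + 1)) = len N (y \<circ> sgen i) + 1"
    using len_comp_sgen[OF permutes_compose[OF sgen_permutes y], of i "i + 1"] y_vals vals i
    by (simp add: sgen_def)
  ultimately have "len N w = len N y + 2"
    using w_eq by simp
  moreover have "\<not> right_descent N y i" "\<not> right_descent N y (i + 1)"
    using not_right_descent_iff[OF y, of i] not_right_descent_iff[OF y, of "i + 1"] y_vals vals i
    by (simp_all add: add.assoc)
  ultimately show ?thesis
    unfolding unmatched_ascent_def using i y z \<open>x = w \<circ> z\<close> w_eq len_x z_asc
    by (intro exI[of _ i] exI[of _ y] exI[of _ z]) auto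
qed

lemma unmatched_descent_if_312:
  assumes x: "x permutes {1..N}" and "contains_pattern N x [3, 1, 2]"
  shows "unmatched_descent N x"
proof -
  obtain p q r where pqr: "1 \<le> p" "p < q" "q < r" "r \<le> N" and vals: "x q < x r" "x r < x p"
    and tight: "\<And>s. p < s \<Longrightarrow> s < q \<Longrightarrow> x s < x p" "\<And>s. q < s \<Longrightarrow> s < r \<Longrightarrow> x r < x s"
    using obtain_tight_312[OF assms] by blast
  obtain w z where w: "w permutes {1..N}" and z: "z permutes {1..N}" and "x = w \<circ> z"
    and len_x: "len N x = len N w + len N z"
    and w_vals: "w (q - 1) = x p" "w q = x q" "w (q + 1) = x r"
    and z_asc: "\<not> left_descent N z (q - 1)" "\<not> left_descent N z q"
    using gathered_factorization[OF x pqr tight] by blast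
  define i where "i = q - 1"
  have i: "1 \<le> i" "i + 1 = q" "i + 2 \<le> N"
    using pqr by (auto simp: i_def)
  define y where "y = w \<circ> sgen i \<circ> sgen (i + 1)"
  have y: "y permutes {1..N}"
    using i unfolding y_def by (intro permutes_compose[OF sgen_permutes] w) auto
  have w_eq: "w = y \<circ> sgen (i + 1) \<circ> sgen i"
    by (simp add: y_def fun_eq_iff sgen_def)
  have y_vals: "y i = x q" "y (i + 1) = x r" "y (i + 2) = x p"
    using w_vals i by (simp_all add: y_def sgen_def i_def)
  moreover have "len N (y \<circ> sgen (i + 1)) = len N y + 1"
    using len_comp_sgen[OF y, of "i + 1"] y_vals vals i by (simp add: add.assoc)
  moreover have "len N (y \<circ> sgen (i + 1) \<circ> sgen i) = len N (y \<circ> sgen (i + 1)) + 1"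
    using len_comp_sgen[OF permutes_compose[OF sgen_permutes y], of "i + 1" i] y_vals vals i
    by (simp add: sgen_def)
  ultimately have "len N w = len N y + 2"
    using w_eq by simp
  moreover have "\<not> right_descent N y i" "\<not> right_descent N y (i + 1)"
    using not_right_descent_iff[OF y, of i] not_right_descent_iff[OF y, of "i + 1"] y_vals vals i
    by (simp_all add: add.assoc)
  ultimately show ?thesis
    unfolding unmatched_descent_def using i y z \<open>x = w \<circ> z\<close> w_eq len_x z_asc
    by (intro exI[of _ i] exI[of _ y] exI[of _ z]) auto
qed

lemma increasing_if_no_right_descents:
  assumes y: "y permutes {1..N}" and i: "1 \<le> i" "i + 2 \<le> N"
    and "\<not> right_descent N y i" "\<not> right_descent N y (i + 1)"
  shows "y i < y (i + 1) \<and> y (i + 1) < y (i + 2)"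
  using assms(4,5) not_right_descent_iff[OF y, of i] not_right_descent_iff[OF y, of "i + 1"] i
  by (simp add: add.assoc)

lemma inv_increasing_if_no_left_descents:
  assumes z: "z permutes {1..N}" and i: "1 \<le> i" "i + 2 \<le> N"
    and "\<not> left_descent N z i" "\<not> left_descent N z (i + 1)"
  shows "1 \<le> inv z i \<and> inv z i < inv z (i + 1) \<and> inv z (i + 1) < inv z (i + 2) \<and> inv z (i + 2) \<le> N"
proof -
  have "inv z i \<in> {1..N}" "inv z (i + 2) \<in> {1..N}"
    using i by (simp_all only: permutes_in_image[OF permutes_inv[OF z]]) auto
  then show ?thesis
    using assms(4,5) not_left_descent_iff[OF z, of i] not_left_descent_iff[OF z, of "i + 1"] i
    by (simp add: add.assoc)
qed

lemma contains_231_if_unmatched_ascent: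
  assumes "unmatched_ascent N x"
  shows "contains_pattern N x [2, 3, 1]"
proof -
  obtain i y z where i: "1 \<le> i" "i + 1 \<le> N - 1" and y: "y permutes {1..N}" and z: "z permutes {1..N}"
    and x: "x = y \<circ> sgen i \<circ> sgen (i + 1) \<circ> z"
    and asc: "\<not> right_descent N y i" "\<not> right_descent N y (i + 1)"
      "\<not> left_descent N z i" "\<not> left_descent N z (i + 1)"
    using assms unfolding unmatched_ascent_def by blast
  have "x (inv z i) = y (i + 1)" "x (inv z (i + 1)) = y (i + 2)" "x (inv z (i + 2)) = y i"
    unfolding x by (simp_all add: permutes_inverses[OF z] sgen_def)
  moreover have "i + 2 \<le> N"
    using i by simp
  ultimately show ?thesis
    unfolding contains_231_iff
    using increasing_if_no_right_descents[OF y i(1) _ asc(1,2)]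
      inv_increasing_if_no_left_descents[OF z i(1) _ asc(3,4)]
    by metis
qed

lemma contains_312_if_unmatched_descent:
  assumes "unmatched_descent N x"
  shows "contains_pattern N x [3, 1, 2]"
proof -
  obtain i y z where i: "1 \<le> i" "i + 1 \<le> N - 1" and y: "y permutes {1..N}" and z: "z permutes {1..N}"
    and x: "x = y \<circ> sgen (i + 1) \<circ> sgen i \<circ> z"
    and asc: "\<not> right_descent N y i" "\<not> right_descent N y (i + 1)"
      "\<not> left_descent N z i" "\<not> left_descent N z (i + 1)"
    using assms unfolding unmatched_descent_def by blast
  have "x (inv z i) = y (i + 2)" "x (inv z (i + 1)) = y i" "x (inv z (i + 2)) = y (i + 1)"
    unfolding x by (simp_all add: permutes_inverses[OF z] sgen_def)
  moreover have "i + 2 \<le> N"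
    using i by simp
  ultimately show ?thesis
    unfolding contains_312_iff
    using increasing_if_no_right_descents[OF y i(1) _ asc(1,2)]
      inv_increasing_if_no_left_descents[OF z i(1) _ asc(3,4)]
    by metis
qed

theorem mainTheorem11:
  fixes N :: nat and x :: "nat \<Rightarrow> nat"
  assumes "x permutes {1..N}"
  shows "(contains_pattern N x [2, 3, 1] \<longleftrightarrow> unmatched_ascent N x) \<and>
         (contains_pattern N x [3, 1, 2] \<longleftrightarrow> unmatched_descent N x)"
  using unmatched_ascent_if_231[OF assms] contains_231_if_unmatched_ascent
    unmatched_descent_if_312[OF assms] contains_312_if_unmatched_descent
  by blast

end
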